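(* Let $d\in\mathbb Z$ and let $P:k((z))\to k((z))$ be a $k$-linear operator of the form $P(\sum_\beta c_\beta z^\beta)=\sum_\beta c_\beta\sum_{i\ge0}p_i(\beta)z^{\beta+d+i}$ with $p_0(\beta)=1$ for all $\beta$ and each $p_i(\beta)$ a polynomial in $\beta$. For integers $\alpha\ge0$ write $P^\alpha(\sum_\beta c_\beta z^\beta)=\sum_\beta c_\beta\sum_{i\ge0}p_i(\alpha,\beta)z^{\beta+\alpha d+i}$. Then for every $i$, $p_i(\alpha,\beta)$ is given by a polynomial in $\alpha$ and $\beta$.
   Context: $k$ is a field of characteristic zero. The coefficients $p_i(\alpha,\beta)$ are defined for integers $\alpha\ge0,\beta$ by the displayed expansion of the $\alpha$-th power of $P$ (so $p_i(1,\beta)=p_i(\beta)$, $p_0(0,\beta)=1$, $p_i(0,\beta)=0$ for $i>0$). *)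

theory Defs
  imports "HOL-Computational_Algebra.Formal_Laurent_Series"
begin

text \<open>The operator P on k((z)) determined by the shift d and the coefficient
  polynomials p i:  P(sum_b c_b z^b) = sum_b c_b sum_i (p i)(b) z^(b+d+i).\<close>

definition laurent_op_coeffs ::
  "int \<Rightarrow> (nat \<Rightarrow> 'a::comm_ring_1 poly) \<Rightarrow> 'a fls \<Rightarrow> int \<Rightarrow> 'a" where
  "laurent_op_coeffs d p f n =
     (\<Sum>b\<in>{fls_subdegree f..n - d}. fls_nth f b * poly (p (nat (n - d - b))) (of_int b))"

lemma laurent_op_coeffs_wd:
  "laurent_op_coeffs d p f \<in> {g. \<forall>\<^sub>\<infinity> n::nat. g (- int n) = 0}"
proof -
  have "\<forall>n > nat (\<bar>d\<bar> + \<bar>fls_subdegree f\<bar>). laurent_op_coeffs d p f (- int n) = 0"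
    by (auto simp: laurent_op_coeffs_def)
  then show ?thesis by (auto simp: MOST_nat)
qed

definition laurent_op :: "int \<Rightarrow> (nat \<Rightarrow> 'a::comm_ring_1 poly) \<Rightarrow> 'a fls \<Rightarrow> 'a fls" where
  "laurent_op d p f = Abs_fls (laurent_op_coeffs d p f)"

lemma fls_nth_laurent_op:
  "fls_nth (laurent_op d p f) n = laurent_op_coeffs d p f n"
  using laurent_op_coeffs_wd[of d p f]
  by (simp add: laurent_op_def Abs_fls_inverse)

definition pcoeff :: "int \<Rightarrow> (nat \<Rightarrow> 'a::comm_ring_1 poly) \<Rightarrow> nat \<Rightarrow> nat \<Rightarrow> int \<Rightarrow> 'a" where
  "pcoeff d p i \<alpha> \<beta> = fls_nth ((laurent_op d p ^^ \<alpha>) (fls_X_intpow \<beta>)) (\<beta> + int \<alpha> * d + int i)"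

end

theory Submission
  imports Defs
begin

(* Write F_alpha = P^alpha(z^beta).  Since P raises the order of a
   series by exactly d, F_alpha vanishes below z^(beta + alpha d), and reading off
   the coefficient of z^(beta + (alpha+1) d + i) in P(F_alpha) gives, using p_0 = 1,

     p_i(alpha+1,beta) = p_i(alpha,beta)
                         + sum_{j<i} p_j(alpha,beta) * p_{i-j}(beta + alpha d + j).

   Unrolling in alpha, p_i(alpha,beta) is delta_{i0} plus a discrete sum over
   a < alpha of an expression built from the p_j (j < i), which by induction on i
   are polynomials in (a,beta).  Discrete summation preserves polynomiality
   (Faulhaber: sum_{t<x} t^k is a polynomial in x over a field of characteristic 0). *)

section \<open>Polynomial functions of two variables\<close>

definition poly_fun2 :: "(nat \<Rightarrow> int \<Rightarrow> 'a::comm_ring_1) \<Rightarrow> bool" where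
  "poly_fun2 f \<longleftrightarrow> (\<exists>Q. \<forall>x y. f x y = poly (poly Q [:of_int y:]) (of_nat x))"

lemma poly_fun2_const: "poly_fun2 (\<lambda>x y. c)"
  unfolding poly_fun2_def by (rule exI[of _ "[:[:c:]:]"]) simp

lemma poly_fun2_fst: "poly_fun2 (\<lambda>x y. of_nat x)"
  unfolding poly_fun2_def by (rule exI[of _ "[:[:0, 1:]:]"]) simp

lemma poly_fun2_snd: "poly_fun2 (\<lambda>x y. of_int y)"
  unfolding poly_fun2_def by (rule exI[of _ "[:0, 1:]"]) simp

lemma poly_fun2_add: "poly_fun2 f \<Longrightarrow> poly_fun2 g \<Longrightarrow> poly_fun2 (\<lambda>x y. f x y + g x y)"
  unfolding poly_fun2_def by (metis poly_add)

lemma poly_fun2_mult: "poly_fun2 f \<Longrightarrow> poly_fun2 g \<Longrightarrow> poly_fun2 (\<lambda>x y. f x y * g x y)"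
  unfolding poly_fun2_def by (metis poly_mult)

lemma poly_fun2_sum:
  "finite A \<Longrightarrow> (\<And>a. a \<in> A \<Longrightarrow> poly_fun2 (f a)) \<Longrightarrow> poly_fun2 (\<lambda>x y. \<Sum>a\<in>A. f a x y)"
  by (induction A rule: finite_induct) (auto intro: poly_fun2_add poly_fun2_const)

lemma poly_fun2_power: "poly_fun2 f \<Longrightarrow> poly_fun2 (\<lambda>x y. f x y ^ k)"
  by (induction k) (auto intro: poly_fun2_mult poly_fun2_const)

lemma poly_fun2_poly: "poly_fun2 f \<Longrightarrow> poly_fun2 (\<lambda>x y. poly r (f x y))"
  by (induction r) (simp_all add: poly_fun2_add poly_fun2_mult poly_fun2_const)

lemma poly_fun2_cong: "poly_fun2 f \<Longrightarrow> (\<And>x y. g x y = f x y) \<Longrightarrow> poly_fun2 g"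
  unfolding poly_fun2_def by metis

lemma poly_eq_sum_upto:
  fixes p :: "'a::comm_semiring_1 poly"
  assumes "degree p \<le> N"
  shows "poly p x = (\<Sum>i\<le>N. coeff p i * x ^ i)"
proof -
  have "(\<Sum>i\<le>degree p. coeff p i * x ^ i) = (\<Sum>i\<le>N. coeff p i * x ^ i)"
    using assms by (intro sum.mono_neutral_left) (auto simp: coeff_eq_0)
  then show ?thesis by (simp add: poly_altdef)
qed

lemma poly_fun2_normal_form:
  assumes "poly_fun2 f"
  shows "\<exists>(N::nat) c. \<forall>x y. f x y = (\<Sum>a\<le>N. \<Sum>b\<le>N. c a b * of_nat x ^ a * of_int y ^ b)"
proof -
  obtain Q where Q: "\<And>x y. f x y = poly (poly Q [:of_int y:]) (of_nat x)"
    using assms unfolding poly_fun2_def by blast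
  define N where "N = degree Q + (\<Sum>b\<le>degree Q. degree (coeff Q b))"
  have deg_Q: "degree Q \<le> N" unfolding N_def by simp
  have deg_coeff: "degree (coeff Q b) \<le> N" for b
  proof (cases "b \<le> degree Q")
    case True
    then have "degree (coeff Q b) \<le> (\<Sum>b\<le>degree Q. degree (coeff Q b))"
      by (intro member_le_sum) auto
    then show ?thesis unfolding N_def by simp
  qed (simp add: coeff_eq_0)
  have "f x y = (\<Sum>a\<le>N. \<Sum>b\<le>N. coeff (coeff Q b) a * of_nat x ^ a * of_int y ^ b)" for x y
  proof -
    have "f x y = poly (\<Sum>b\<le>N. coeff Q b * [:of_int y:] ^ b) (of_nat x)"
      unfolding Q using poly_eq_sum_upto[OF deg_Q] by metis
    also have "\<dots> = (\<Sum>b\<le>N. \<Sum>a\<le>N. coeff (coeff Q b) a * of_nat x ^ a * of_int y ^ b)"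
      by (simp add: poly_sum poly_power poly_eq_sum_upto[OF deg_coeff] sum_distrib_right)
    also have "\<dots> = (\<Sum>a\<le>N. \<Sum>b\<le>N. coeff (coeff Q b) a * of_nat x ^ a * of_int y ^ b)"
      by (rule sum.swap)
    finally show ?thesis .
  qed
  then show ?thesis by (intro exI[of _ N] exI[of _ "\<lambda>a b. coeff (coeff Q b) a"]) simp
qed

section \<open>Discrete summation preserves polynomiality\<close>

text \<open>Telescoping (t+1)^(k+1) - t^(k+1)
  expresses x^(k+1) through the power sums of exponent at most k, and the top one has
  the invertible coefficient k+1 (characteristic 0).\<close>

lemma power_sum_poly_fun2: "poly_fun2 (\<lambda>x (y::int). (\<Sum>t<x. of_nat t ^ k) :: 'a::field_char_0)"
proof (induction k rule: less_induct)
  case (less k)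
  define S where "S j x = (\<Sum>t<x. of_nat t ^ j :: 'a)" for j x
  have telescope: "of_nat x ^ Suc k = (\<Sum>j\<le>k. of_nat (Suc k choose j) * S j x)" for x
  proof -
    have "of_nat x ^ Suc k = (\<Sum>t<x. (of_nat (Suc t) ^ Suc k - of_nat t ^ Suc k :: 'a))"
      by (subst sum_lessThan_telescope[where f = "\<lambda>t. of_nat t ^ Suc k"]) simp
    also have "\<dots> = (\<Sum>t<x. \<Sum>j\<le>k. of_nat (Suc k choose j) * of_nat t ^ j)"
    proof (rule sum.cong[OF refl])
      fix t
      have "(of_nat t + 1 :: 'a) ^ Suc k
          = (\<Sum>j\<le>Suc k. of_nat (Suc k choose j) * of_nat t ^ j * 1 ^ (Suc k - j))"
        by (rule binomial_ring)
      then show "(of_nat (Suc t) ^ Suc k - of_nat t ^ Suc k :: 'a)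
          = (\<Sum>j\<le>k. of_nat (Suc k choose j) * of_nat t ^ j)"
        by (simp add: algebra_simps)
    qed
    also have "\<dots> = (\<Sum>j\<le>k. of_nat (Suc k choose j) * S j x)"
      unfolding S_def by (subst sum.swap) (simp add: sum_distrib_left)
    finally show ?thesis .
  qed
  have solved: "S k x = (of_nat x ^ Suc k + (-1) * (\<Sum>j<k. of_nat (Suc k choose j) * S j x))
                        * (1 / of_nat (Suc k))" for x
  proof -
    have "of_nat x ^ Suc k = (\<Sum>j<k. of_nat (Suc k choose j) * S j x) + of_nat (Suc k) * S k x"
      unfolding telescope by (simp add: lessThan_Suc_atMost[symmetric])
    then show ?thesis by (simp add: field_simps del: of_nat_Suc)
  qed
  have "poly_fun2 (\<lambda>x (y::int). (of_nat x ^ Suc k + (-1) * (\<Sum>j<k. of_nat (Suc k choose j) * S j x))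
                               * (1 / of_nat (Suc k) :: 'a))"
    using less unfolding S_def
    by (intro poly_fun2_mult poly_fun2_add poly_fun2_power poly_fun2_fst poly_fun2_const
        poly_fun2_sum) auto
  then show ?case by (rule poly_fun2_cong) (use solved in \<open>simp add: S_def\<close>)
qed

lemma poly_fun2_discrete_sum:
  assumes "poly_fun2 (f :: nat \<Rightarrow> int \<Rightarrow> 'a::field_char_0)"
  shows "poly_fun2 (\<lambda>x y. \<Sum>t<x. f t y)"
proof -
  obtain N c where f: "\<And>x y. f x y = (\<Sum>a\<le>N. \<Sum>b\<le>N. c a b * of_nat x ^ a * of_int y ^ b)"
    using poly_fun2_normal_form[OF assms] by blast
  have "(\<Sum>t<x. f t y) = (\<Sum>a\<le>N. \<Sum>b\<le>N. c a b * (\<Sum>t<x. of_nat t ^ a) * of_int y ^ b)" for x y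
    unfolding f
    by (simp add: sum.swap[of _ "{..<x}"] sum_distrib_left sum_distrib_right mult.assoc)
  moreover have "poly_fun2 (\<lambda>x y. \<Sum>a\<le>N. \<Sum>b\<le>N. c a b * (\<Sum>t<x. of_nat t ^ a) * of_int y ^ b :: 'a)"
    by (intro poly_fun2_sum poly_fun2_mult poly_fun2_const power_sum_poly_fun2
        poly_fun2_power poly_fun2_snd) auto
  ultimately show ?thesis by simp
qed

section \<open>The coefficients of P^alpha(z^beta)\<close>

lemma laurent_op_coeffs_from:
  assumes "\<And>b. b < m \<Longrightarrow> fls_nth f b = 0"
  shows "laurent_op_coeffs d p f n
           = (\<Sum>b\<in>{m..n-d}. fls_nth f b * poly (p (nat (n - d - b))) (of_int b))"
proof -
  let ?g = "\<lambda>b. fls_nth f b * poly (p (nat (n - d - b))) (of_int b)"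
  let ?s = "fls_subdegree f"
  have "sum ?g {?s..n-d} = sum ?g {min m ?s..n-d}"
    by (intro sum.mono_neutral_left) auto
  moreover have "sum ?g {m..n-d} = sum ?g {min m ?s..n-d}"
    by (intro sum.mono_neutral_left) (auto simp: assms)
  ultimately show ?thesis unfolding laurent_op_coeffs_def by simp
qed

lemma laurent_op_power_vanishes:
  "n < \<beta> + int \<alpha> * d \<Longrightarrow> fls_nth ((laurent_op d p ^^ \<alpha>) (fls_X_intpow \<beta>)) n = 0"
proof (induction \<alpha> arbitrary: n)
  case (Suc \<alpha>)
  have "fls_nth ((laurent_op d p ^^ Suc \<alpha>) (fls_X_intpow \<beta>)) n
      = (\<Sum>b\<in>{\<beta> + int \<alpha> * d..n-d}.
           fls_nth ((laurent_op d p ^^ \<alpha>) (fls_X_intpow \<beta>)) b * poly (p (nat (n - d - b))) (of_int b))"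
    unfolding funpow.simps o_apply fls_nth_laurent_op
    by (rule laurent_op_coeffs_from) (rule Suc.IH)
  also have "\<dots> = 0" using Suc.prems by (simp add: algebra_simps)
  finally show ?case .
qed simp

lemma sum_int_interval_shift: "(\<Sum>b\<in>{m..m + int i}. g b) = (\<Sum>j\<le>i. g (m + int j))"
proof -
  have "{m..m + int i} = (\<lambda>j. m + int j) ` {..i}"
  proof (intro set_eqI iffI)
    fix b assume "b \<in> {m..m + int i}"
    then show "b \<in> (\<lambda>j. m + int j) ` {..i}"
      by (intro image_eqI[of _ _ "nat (b - m)"]) auto
  qed auto
  moreover have "inj_on (\<lambda>j. m + int j) {..i}" by (auto simp: inj_on_def)
  ultimately show ?thesis by (simp add: sum.reindex)
qed

lemma pcoeff_Suc:
  "pcoeff d p i (Suc \<alpha>) \<beta>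
     = (\<Sum>j\<le>i. pcoeff d p j \<alpha> \<beta> * poly (p (i - j)) (of_int (\<beta> + int \<alpha> * d + int j)))"
proof -
  define F where "F = (laurent_op d p ^^ \<alpha>) (fls_X_intpow \<beta>)"
  define m where "m = \<beta> + int \<alpha> * d"
  have F_low: "\<And>b. b < m \<Longrightarrow> fls_nth F b = 0"
    unfolding F_def m_def by (rule laurent_op_power_vanishes)
  have shift: "\<beta> + int (Suc \<alpha>) * d + int i = m + int i + d"
    unfolding m_def by (simp add: algebra_simps)
  have "pcoeff d p i (Suc \<alpha>) \<beta> = laurent_op_coeffs d p F (m + int i + d)"
    unfolding pcoeff_def shift by (simp add: fls_nth_laurent_op F_def)
  also have "\<dots> = (\<Sum>b\<in>{m..m + int i}. fls_nth F b * poly (p (nat (m + int i - b))) (of_int b))"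
    using laurent_op_coeffs_from[of m F d p "m + int i + d", OF F_low] by simp
  also have "\<dots> = (\<Sum>j\<le>i. fls_nth F (m + int j) * poly (p (i - j)) (of_int (m + int j)))"
  proof (unfold sum_int_interval_shift, rule sum.cong[OF refl])
    fix j assume "j \<in> {..i}"
    then have "nat (m + int i - (m + int j)) = i - j" by simp
    then show "fls_nth F (m + int j) * poly (p (nat (m + int i - (m + int j)))) (of_int (m + int j))
        = fls_nth F (m + int j) * poly (p (i - j)) (of_int (m + int j))" by simp
  qed
  also have "\<dots> = (\<Sum>j\<le>i. pcoeff d p j \<alpha> \<beta> * poly (p (i - j)) (of_int (\<beta> + int \<alpha> * d + int j)))"
    unfolding pcoeff_def F_def m_def ..
  finally show ?thesis .
qed

text \<open>Unrolling the recurrence in alpha, using p_0 = 1 so that the j = i term is p_i(alpha,beta):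
  p_i(alpha,beta) is delta_{i0} plus a discrete sum involving only the p_j with j < i.\<close>

lemma pcoeff_unrolled:
  assumes "p 0 = 1"
  shows "pcoeff d p i \<alpha> \<beta> = (if i = 0 then 1 else 0) +
    (\<Sum>a<\<alpha>. \<Sum>j<i. pcoeff d p j a \<beta> * poly (p (i - j)) (of_int (\<beta> + int a * d + int j)))"
proof (induction \<alpha>)
  case (Suc \<alpha>)
  have "{..i} = insert i {..<i}" by auto
  then have "pcoeff d p i (Suc \<alpha>) \<beta> = pcoeff d p i \<alpha> \<beta> +
      (\<Sum>j<i. pcoeff d p j \<alpha> \<beta> * poly (p (i - j)) (of_int (\<beta> + int \<alpha> * d + int j)))"
    by (simp add: pcoeff_Suc assms)
  then show ?case using Suc by simp
qed (simp add: pcoeff_def)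

lemma pcoeff_poly_fun2:
  fixes p :: "nat \<Rightarrow> 'a::field_char_0 poly"
  assumes "p 0 = 1"
  shows "poly_fun2 (pcoeff d p i)"
proof (induction i rule: less_induct)
  case (less i)
  have summand: "poly_fun2 (\<lambda>a \<beta>. \<Sum>j<i. pcoeff d p j a \<beta>
                   * poly (p (i - j)) (of_int \<beta> + of_nat a * of_int d + of_nat j))"
    using less
    by (intro poly_fun2_sum poly_fun2_mult poly_fun2_poly poly_fun2_add poly_fun2_snd
        poly_fun2_fst poly_fun2_const) auto
  have "poly_fun2 (\<lambda>\<alpha> \<beta>. (if i = 0 then 1 else 0) + (\<Sum>a<\<alpha>. \<Sum>j<i. pcoeff d p j a \<beta>
          * poly (p (i - j)) (of_int \<beta> + of_nat a * of_int d + of_nat j)))"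
    by (intro poly_fun2_add poly_fun2_const poly_fun2_discrete_sum[OF summand])
  then show ?case
    by (rule poly_fun2_cong) (subst pcoeff_unrolled[where p = p, OF assms], simp)
qed

theorem lemma7p1:
  fixes d :: int and p :: "nat \<Rightarrow> 'a::field_char_0 poly"
  assumes "p 0 = 1"
  shows "\<forall>i. \<exists>(N::nat) (c :: nat \<Rightarrow> nat \<Rightarrow> 'a). \<forall>(\<alpha>::nat) (\<beta>::int).
           pcoeff d p i \<alpha> \<beta> = (\<Sum>a\<le>N. \<Sum>b\<le>N. c a b * of_nat \<alpha> ^ a * of_int \<beta> ^ b)"
  using poly_fun2_normal_form[OF pcoeff_poly_fun2[where p = p, OF assms]] by blast

end
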